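(* Let $\alpha,\beta,\gamma$ be real numbers with $\gamma>0$ and $(\alpha,\beta)\neq(0,0)$, and consider the discrete-time linear system $$A(t+1) = (1-\alpha\gamma)A(t) + \alpha\gamma B(t),\qquad B(t+1) = (1-\beta\gamma)B(t) + \beta\gamma A(t).$$ If $1-\alpha\gamma-\beta\gamma = 1$, then the system is unstable: there exist initial values $(A(0),B(0))\in\mathbb{R}^2$ for which the trajectory $(A(t),B(t))_{t\ge 0}$ is unbounded.
   Context: The transition matrix of the system is $M=\begin{bmatrix}1-\alpha\gamma & \alpha\gamma\\ \beta\gamma & 1-\beta\gamma\end{bmatrix}$; its eigenvalues are $1$ and $1-\alpha\gamma-\beta\gamma$, so in the case considered both eigenvalues equal $1$ (the system would be called marginally stable by the eigenvalue criterion), and the claim is that the trajectories nevertheless diverge. *)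

theory Defs
  imports "HOL-Analysis.Analysis"
begin

fun traj :: "real \<Rightarrow> real \<Rightarrow> real \<Rightarrow> real \<Rightarrow> real \<Rightarrow> nat \<Rightarrow> real \<times> real" where
  "traj \<alpha> \<beta> \<gamma> A0 B0 0 = (A0, B0)"
| "traj \<alpha> \<beta> \<gamma> A0 B0 (Suc t) =
     (let (a, b) = traj \<alpha> \<beta> \<gamma> A0 B0 t
      in ((1 - \<alpha> * \<gamma>) * a + \<alpha> * \<gamma> * b, (1 - \<beta> * \<gamma>) * b + \<beta> * \<gamma> * a))"

end

theory Submission
  imports Defs
begin

text \<open>When \<open>1 - \<alpha>\<gamma> - \<beta>\<gamma> = 1\<close>, i.e. \<open>\<beta> = -\<alpha>\<close>, the difference \<open>B - A\<close> is invariant,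
  so each step adds the same vector \<open>\<alpha>\<gamma>(B0 - A0) (1, 1)\<close>: the trajectory is an
  arithmetic progression, which is unbounded as soon as \<open>\<alpha>\<gamma> (B0 - A0) \<noteq> 0\<close>.\<close>

lemma unbounded_arithmetic_progression:
  fixes x v :: "'a::real_normed_vector"
  assumes "v \<noteq> 0"
  shows "\<not> bounded (range (\<lambda>t::nat. x + real t *\<^sub>R v))"
proof
  assume "bounded (range (\<lambda>t::nat. x + real t *\<^sub>R v))"
  then obtain M where M: "\<And>t::nat. norm (x + real t *\<^sub>R v) \<le> M"
    unfolding bounded_iff by blast
  obtain n :: nat where n: "real n > (M + norm x) / norm v"
    using reals_Archimedean2 by blast
  have "real n * norm v = norm (x + real n *\<^sub>R v - x)"
    by simp
  also have "\<dots> \<le> M + norm x"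
    using M[of n] norm_triangle_ineq4[of "x + real n *\<^sub>R v" x] by linarith
  finally show False
    using n assms by (simp add: field_simps)
qed

lemma traj_opposite_rates:
  "traj \<alpha> (- \<alpha>) \<gamma> A0 B0 t = (A0, B0) + real t *\<^sub>R (\<alpha> * \<gamma> * (B0 - A0), \<alpha> * \<gamma> * (B0 - A0))"
  by (induction t) (auto simp: algebra_simps)

theorem proposition3:
  fixes \<alpha> \<beta> \<gamma> :: real
  assumes "\<gamma> > 0" and "(\<alpha>, \<beta>) \<noteq> (0, 0)"
    and "1 - \<alpha> * \<gamma> - \<beta> * \<gamma> = 1"
  shows "\<exists>A0 B0. \<not> bounded (range (traj \<alpha> \<beta> \<gamma> A0 B0))"
proof (intro exI)
  have "(\<alpha> + \<beta>) * \<gamma> = 0"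
    using assms(3) by (simp add: algebra_simps)
  then have \<beta>: "\<beta> = - \<alpha>"
    using assms(1) by simp
  then have "\<alpha> * \<gamma> \<noteq> 0"
    using assms(1,2) by auto
  then have "\<not> bounded (range (\<lambda>t::nat. (0, 1) + real t *\<^sub>R (\<alpha> * \<gamma>, \<alpha> * \<gamma>)))"
    by (intro unbounded_arithmetic_progression) (simp add: zero_prod_def)
  then show "\<not> bounded (range (traj \<alpha> \<beta> \<gamma> 0 1))"
    unfolding \<beta> traj_opposite_rates by simp
qed

end
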